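(* Fix $y\in\mathcal Y$, $g\in\mathcal G$ and $x\in\mathcal X$. Restrict attention to the individuals $i\in\mathcal I(xg)$, and assume the matrix $\hat{\mathbf P}=(\hat P_{ir})_{i\in\mathcal I(xg),r\in\mathcal R}$ has full column rank $|\mathcal R|$. Then the following two statements are equivalent. 1. The within-cell weighting estimator and the within-cell OLS estimator coincide: $\hat\mu^{(\mathrm{wtd})}(y\mid r)=\hat\mu^{(\mathrm{ols})}(y\mid r)$ for all $r\in\mathcal R$. 2. For every pair of distinct $j,k\in\mathcal R$, at least one of the following holds: - the probabilities perfectly discriminate between $j$ and $k$, i.e. for every $i\in\mathcal I(xg)$, $\hat P_{ij}>0$ implies $\hat P_{ik}=0$ (equivalently $\sum_{i\in\mathcal I(xg)}\hat P_{ij}\hat P_{ik}=0$); - $\hat\mu^{(\mathrm{wtd})}(y\mid j)=\hat\mu^{(\mathrm{wtd})}(y\mid k)$.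
   Context: There are observations $i$ with outcomes $Y_i\in\mathcal Y$ (a finite set), locations $G_i\in\mathcal G$ and covariates $X_i\in\mathcal X$. Each individual has a vector of race probabilities $(\hat P_{ir})_{r\in\mathcal R}$ (e.g., BISG probabilities) with $\hat P_{ir}\ge0$ and $\sum_{r}\hat P_{ir}=1$. Let $\mathcal I(xg)=\{i:X_i=x,G_i=g\}$ and let $\mathbf 1_y$ be the vector $(\mathbb 1\{Y_i=y\})_{i\in\mathcal I(xg)}$. Within the cell, the weighting estimator is $$\hat\mu^{(\mathrm{wtd})}(y\mid r)=\frac{\sum_{i\in\mathcal I(xg)}\mathbb 1\{Y_i=y\}\hat P_{ir}}{\sum_{i\in\mathcal I(xg)}\hat P_{ir}},$$ and the OLS estimator is the vector $$\hat{\boldsymbol\mu}^{(\mathrm{ols})}(y\mid\cdot)=(\hat{\mathbf P}^\top\hat{\mathbf P})^{-1}\hat{\mathbf P}^\top\mathbf 1_y\in\mathbb R^{\mathcal R}.$$ *)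

theory Defs
  imports "HOL-Analysis.Analysis"
begin

text \<open>Within a fixed cell (x,g): the individuals of the cell are the elements of the
finite type 'i, the races are the elements of the finite type 'r.  The matrix
P has rows indexed by individuals and columns by races: P $ i $ r = hat P_{ir}.\<close>

definition outcome_vec :: "('i::finite \<Rightarrow> 'y) \<Rightarrow> 'y \<Rightarrow> real ^ 'i" where
  "outcome_vec Y y = (\<chi> i. if Y i = y then 1 else 0)"

definition mu_wtd :: "real ^ 'r ^ 'i \<Rightarrow> ('i::finite \<Rightarrow> 'y) \<Rightarrow> 'y \<Rightarrow> 'r::finite \<Rightarrow> real" where
  "mu_wtd P Y y r =
     (\<Sum>i\<in>UNIV. (if Y i = y then 1 else 0) * P $ i $ r) / (\<Sum>i\<in>UNIV. P $ i $ r)"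

definition mu_ols :: "real ^ 'r ^ 'i \<Rightarrow> ('i::finite \<Rightarrow> 'y) \<Rightarrow> 'y \<Rightarrow> real ^ 'r::finite" where
  "mu_ols P Y y = matrix_inv (transpose P ** P) *v (transpose P *v outcome_vec Y y)"

end

theory Submission
  imports Defs
begin

text \<open>Write \<open>G = P\<^sup>T P\<close>, \<open>s\<^sub>r = \<Sum>\<^sub>i P\<^sub>i\<^sub>r\<close> and \<open>w\<^sub>r\<close> for the weighting estimates.
Full rank makes \<open>G\<close> invertible, so OLS agrees with \<open>w\<close> iff \<open>w\<close> solves the normal
equations \<open>G \<mu> = P\<^sup>T 1\<^sub>y\<close>. Since the rows of \<open>P\<close> sum to one, the rows of \<open>G\<close>
sum to \<open>s\<close>, and the normal equations at \<open>\<mu> = w\<close> read \<open>\<Sum>\<^sub>k G\<^sub>j\<^sub>k (w\<^sub>k - w\<^sub>j) = 0\<close> for every \<open>j\<close>: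
the graph Laplacian of \<open>G\<close> annihilates \<open>w\<close>. As \<open>G\<close> is symmetric and nonnegative,
this happens iff the Dirichlet energy \<open>\<Sum>\<^sub>j\<^sub>,\<^sub>k G\<^sub>j\<^sub>k (w\<^sub>k - w\<^sub>j)\<^sup>2\<close> vanishes, i.e. iff
\<open>w\<^sub>j = w\<^sub>k\<close> whenever \<open>G\<^sub>j\<^sub>k = \<Sum>\<^sub>i P\<^sub>i\<^sub>j P\<^sub>i\<^sub>k > 0\<close>.\<close>

lemma laplacian_energy:
  fixes G :: "'r::finite \<Rightarrow> 'r \<Rightarrow> real" and w :: "'r \<Rightarrow> real"
  assumes sym: "\<And>j k. G j k = G k j"
  shows "(\<Sum>j\<in>UNIV. \<Sum>k\<in>UNIV. G j k * (w k - w j)\<^sup>2)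
       = - 2 * (\<Sum>j\<in>UNIV. w j * (\<Sum>k\<in>UNIV. G j k * (w k - w j)))"
proof -
  have "(\<Sum>j\<in>UNIV. \<Sum>k\<in>UNIV. G j k * (w k - w j) * w k)
      = (\<Sum>j\<in>UNIV. \<Sum>k\<in>UNIV. G k j * (w j - w k) * w j)"
    by (rule sum.swap)
  also have "\<dots> = - (\<Sum>j\<in>UNIV. w j * (\<Sum>k\<in>UNIV. G j k * (w k - w j)))"
    by (simp add: sum_distrib_left sum_negf[symmetric] sym algebra_simps)
  finally have "(\<Sum>j\<in>UNIV. \<Sum>k\<in>UNIV. G j k * (w k - w j) * w k)
      = - (\<Sum>j\<in>UNIV. w j * (\<Sum>k\<in>UNIV. G j k * (w k - w j)))" .
  moreover have "(\<Sum>j\<in>UNIV. \<Sum>k\<in>UNIV. G j k * (w k - w j)\<^sup>2)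
      = (\<Sum>j\<in>UNIV. \<Sum>k\<in>UNIV. G j k * (w k - w j) * w k)
        - (\<Sum>j\<in>UNIV. w j * (\<Sum>k\<in>UNIV. G j k * (w k - w j)))"
    by (simp add: sum_distrib_left sum_subtractf[symmetric] power2_eq_square algebra_simps)
  ultimately show ?thesis by simp
qed

lemma laplacian_eq_0_iff:
  fixes G :: "'r::finite \<Rightarrow> 'r \<Rightarrow> real" and w :: "'r \<Rightarrow> real"
  assumes sym: "\<And>j k. G j k = G k j" and nonneg: "\<And>j k. G j k \<ge> 0"
  shows "(\<forall>j. (\<Sum>k\<in>UNIV. G j k * (w k - w j)) = 0) \<longleftrightarrow> (\<forall>j k. G j k * (w k - w j) = 0)"
proof
  assume "\<forall>j. (\<Sum>k\<in>UNIV. G j k * (w k - w j)) = 0"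
  then have energy: "(\<Sum>j\<in>UNIV. \<Sum>k\<in>UNIV. G j k * (w k - w j)\<^sup>2) = 0"
    by (simp add: laplacian_energy[OF sym])
  have terms_nonneg: "G j k * (w k - w j)\<^sup>2 \<ge> 0" for j k
    using nonneg by simp
  have "G j k * (w k - w j)\<^sup>2 = 0" for j k
    using energy by (simp add: sum_nonneg_eq_0_iff sum_nonneg terms_nonneg)
  then show "\<forall>j k. G j k * (w k - w j) = 0"
    by (simp add: power2_eq_square)
next
  assume "\<forall>j k. G j k * (w k - w j) = 0"
  then show "\<forall>j. (\<Sum>k\<in>UNIV. G j k * (w k - w j)) = 0"
    by (simp only: sum.neutral_const) simp
qed

lemma matrix_inv_mult_eq_iff:
  fixes A :: "'a::field ^ 'n ^ 'n"
  assumes "invertible A"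
  shows "x = matrix_inv A *v b \<longleftrightarrow> A *v x = b"
proof -
  have inv: "matrix_inv A ** A = mat 1" "A ** matrix_inv A = mat 1"
    using assms unfolding invertible_def matrix_inv_def by (metis (mono_tags, lifting) someI_ex)+
  show ?thesis
    by (metis inv matrix_vector_mul_assoc matrix_vector_mul_lid)
qed

lemma gram_matrix_entry:
  fixes P :: "'a::comm_semiring_1 ^ 'n ^ 'm"
  shows "(transpose P ** P) $ j $ k = (\<Sum>i\<in>UNIV. P $ i $ j * P $ i $ k)"
  by (simp add: matrix_matrix_mult_def transpose_def)

lemma invertible_gram_matrix:
  fixes P :: "real ^ 'n ^ 'm"
  assumes "rank P = CARD('n)"
  shows "invertible (transpose P ** P)"
proof -
  have "v = 0" if "(transpose P ** P) *v v = 0" for v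
  proof -
    have "(P *v v) \<bullet> (P *v v) = (transpose P *v (P *v v)) \<bullet> v"
      by (simp add: dot_lmul_matrix)
    also have "\<dots> = 0"
      using that by (simp add: matrix_vector_mul_assoc)
    finally have "P *v v = 0" by simp
    then show "v = 0"
      using assms full_rank_injective by (metis injD matrix_vector_mult_0_right)
  qed
  then show ?thesis
    unfolding invertible_left_inverse matrix_left_invertible_ker by blast
qed

lemma full_rank_column_nonzero:
  fixes P :: "real ^ 'n ^ 'm"
  assumes "rank P = CARD('n)"
  shows "\<exists>i. P $ i $ r \<noteq> 0"
proof -
  have "P *v axis r 1 \<noteq> 0"
    using assms full_rank_injective axis_eq_0_iff
    by (metis injD matrix_vector_mult_0_right zero_neq_one)
  then show ?thesis
    by (auto simp: matrix_vector_mult_basis column_def vec_eq_iff)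
qed

lemma gram_matrix_entry_eq_0_iff:
  fixes P :: "real ^ 'n ^ 'm"
  assumes "\<And>i r. P $ i $ r \<ge> 0"
  shows "(transpose P ** P) $ j $ k = 0 \<longleftrightarrow> (\<forall>i. P $ i $ j > 0 \<longrightarrow> P $ i $ k = 0)"
proof -
  have "P $ i $ j * P $ i $ k = 0 \<longleftrightarrow> (P $ i $ j > 0 \<longrightarrow> P $ i $ k = 0)" for i
    using assms[of i j] by auto
  then show ?thesis
    unfolding gram_matrix_entry using assms
    by (subst sum_nonneg_eq_0_iff) auto
qed

lemma transpose_mult_outcome_vec:
  fixes P :: "real ^ 'r::finite ^ 'i::finite"
  assumes "(\<Sum>i\<in>UNIV. P $ i $ r) \<noteq> 0"
  shows "(transpose P *v outcome_vec Y y) $ r = mu_wtd P Y y r * (\<Sum>i\<in>UNIV. P $ i $ r)"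
  using assms
  by (simp add: mu_wtd_def outcome_vec_def matrix_vector_mult_def transpose_def mult.commute)

lemma mu_wtd_eq_mu_ols_iff_laplacian:
  fixes P :: "real ^ 'r::finite ^ 'i::finite"
  assumes nonneg: "\<And>i r. P $ i $ r \<ge> 0"
    and rowsum: "\<And>i. (\<Sum>r\<in>UNIV. P $ i $ r) = 1"
    and fullrank: "rank P = CARD('r)"
  defines "G \<equiv> transpose P ** P"
  shows "(\<forall>r. mu_wtd P Y y r = mu_ols P Y y $ r) \<longleftrightarrow>
         (\<forall>j. (\<Sum>k\<in>UNIV. G $ j $ k * (mu_wtd P Y y k - mu_wtd P Y y j)) = 0)"
proof -
  define w where "w = (\<chi> r. mu_wtd P Y y r)"
  have colsum_pos: "(\<Sum>i\<in>UNIV. P $ i $ r) > 0" for r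
  proof -
    obtain i where "P $ i $ r \<noteq> 0"
      using full_rank_column_nonzero[OF fullrank] by blast
    then have "P $ i $ r > 0"
      using nonneg[of i r] by simp
    also have "P $ i $ r \<le> (\<Sum>i\<in>UNIV. P $ i $ r)"
      by (rule member_le_sum) (simp_all add: nonneg)
    finally show ?thesis .
  qed
  have G_rowsum: "(\<Sum>k\<in>UNIV. G $ j $ k) = (\<Sum>i\<in>UNIV. P $ i $ j)" for j
    unfolding G_def gram_matrix_entry sum_distrib_left[symmetric]
    by (subst sum.swap) (simp add: rowsum flip: sum_distrib_left)
  have residual: "(G *v w) $ j - (transpose P *v outcome_vec Y y) $ j
      = (\<Sum>k\<in>UNIV. G $ j $ k * (mu_wtd P Y y k - mu_wtd P Y y j))" for j
  proof -
    have "(transpose P *v outcome_vec Y y) $ j = (\<Sum>k\<in>UNIV. G $ j $ k * mu_wtd P Y y j)"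
      using transpose_mult_outcome_vec[of P j Y y] colsum_pos[of j]
      by (simp add: G_rowsum flip: sum_distrib_right)
    moreover have "(G *v w) $ j = (\<Sum>k\<in>UNIV. G $ j $ k * mu_wtd P Y y k)"
      by (simp add: matrix_vector_mult_def w_def)
    ultimately show ?thesis
      by (simp add: right_diff_distrib sum_subtractf)
  qed
  have "(\<forall>r. mu_wtd P Y y r = mu_ols P Y y $ r) \<longleftrightarrow> w = matrix_inv G *v (transpose P *v outcome_vec Y y)"
    by (simp add: mu_ols_def G_def w_def vec_eq_iff)
  also have "\<dots> \<longleftrightarrow> G *v w = transpose P *v outcome_vec Y y"
    using invertible_gram_matrix[OF fullrank] by (simp add: G_def matrix_inv_mult_eq_iff)
  finally show ?thesis
    by (simp add: vec_eq_iff residual[symmetric])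
qed

theorem theorem4:
  fixes P :: "real ^ 'r::finite ^ 'i::finite"
    and Y :: "'i \<Rightarrow> 'y"
    and y :: 'y
  assumes nonneg: "\<And>i r. P $ i $ r \<ge> 0"
    and rowsum: "\<And>i. (\<Sum>r\<in>UNIV. P $ i $ r) = 1"
    and fullrank: "rank P = CARD('r)"
  shows "(\<forall>r. mu_wtd P Y y r = mu_ols P Y y $ r) \<longleftrightarrow>
         (\<forall>j k. j \<noteq> k \<longrightarrow>
             ((\<forall>i. P $ i $ j > 0 \<longrightarrow> P $ i $ k = 0) \<or> mu_wtd P Y y j = mu_wtd P Y y k))"
proof -
  let ?G = "\<lambda>j k. (transpose P ** P) $ j $ k"
  have "(\<forall>r. mu_wtd P Y y r = mu_ols P Y y $ r) \<longleftrightarrow>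
        (\<forall>j k. ?G j k * (mu_wtd P Y y k - mu_wtd P Y y j) = 0)"
    unfolding mu_wtd_eq_mu_ols_iff_laplacian[OF nonneg rowsum fullrank]
    by (rule laplacian_eq_0_iff)
      (simp_all add: gram_matrix_entry mult.commute sum_nonneg nonneg)
  also have "\<dots> \<longleftrightarrow> (\<forall>j k. j \<noteq> k \<longrightarrow>
             ((\<forall>i. P $ i $ j > 0 \<longrightarrow> P $ i $ k = 0) \<or> mu_wtd P Y y j = mu_wtd P Y y k))"
    unfolding gram_matrix_entry_eq_0_iff[OF nonneg, symmetric] by (metis mult_eq_0_iff right_minus_eq)
  finally show ?thesis .
qed

end
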